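(* Let $E$ be a non-trivial locally convex space such that $(E,\sigma(E,E'))$ is a $\sigma$-space. Then: (i) $(E,\sigma(E,E'))$ admits a weaker separable metrizable locally convex topology; (ii) $(E,\sigma(E,E'))$ has countable pseudocharacter and $|E|=\mathfrak c$; (iii) $(E',\sigma(E',E))$ is separable.
   Context: A $\sigma$-space is a regular space having a $\sigma$-locally finite network, where a network is a family $\mathcal N$ of sets such that every open $U$ and $x\in U$ admit $N\in\mathcal N$ with $x\in N\subset U$. Countable pseudocharacter means every point is the intersection of countably many of its open neighbourhoods. *)

theory Defs
  imports "HOL-Analysis.Analysis" "HOL-Library.Equipollence"
begin

definition locally_convex_topology :: "('a::real_vector) topology \<Rightarrow> bool" where
  "locally_convex_topology T \<longleftrightarrow>
     topspace T = UNIV \<and>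
     continuous_map (prod_topology T T) T (\<lambda>(x, y). x + y) \<and>
     continuous_map (prod_topology euclideanreal T) T (\<lambda>(c, x). c *\<^sub>R x) \<and>
     Hausdorff_space T \<and>
     (\<forall>U x. openin T U \<and> x \<in> U \<longrightarrow> (\<exists>V. openin T V \<and> convex V \<and> x \<in> V \<and> V \<subseteq> U))"

definition dual_space :: "('a::real_vector) topology \<Rightarrow> ('a \<Rightarrow> real) set" where
  "dual_space T = {f. linear f \<and> continuous_map T euclideanreal f}"

definition weak_topology :: "('a::real_vector) topology \<Rightarrow> 'a topology" where
  "weak_topology T = topology_generated_by {f -` U | f U. f \<in> dual_space T \<and> open U}"

definition weak_star_topology :: "('a::real_vector) topology \<Rightarrow> ('a \<Rightarrow> real) topology" where
  "weak_star_topology T = subtopology (powertop_real UNIV) (dual_space T)"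

definition network_in :: "'a topology \<Rightarrow> 'a set set \<Rightarrow> bool" where
  "network_in X \<N> \<longleftrightarrow>
     (\<forall>U x. openin X U \<and> x \<in> U \<longrightarrow> (\<exists>N\<in>\<N>. x \<in> N \<and> N \<subseteq> U))"

definition sigma_locally_finite_in :: "'a topology \<Rightarrow> 'a set set \<Rightarrow> bool" where
  "sigma_locally_finite_in X \<N> \<longleftrightarrow>
     (\<exists>\<F> :: nat \<Rightarrow> 'a set set. \<N> = (\<Union>n. \<F> n) \<and> (\<forall>n. locally_finite_in X (\<F> n)))"

definition sigma_space :: "'a topology \<Rightarrow> bool" where
  "sigma_space X \<longleftrightarrow> regular_space X \<and>
     (\<exists>\<N>. network_in X \<N> \<and> sigma_locally_finite_in X \<N>)"

definition countable_pseudocharacter :: "'a topology \<Rightarrow> bool" where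
  "countable_pseudocharacter X \<longleftrightarrow>
     (\<forall>x\<in>topspace X. \<exists>\<U>. countable \<U> \<and> (\<forall>U\<in>\<U>. openin X U \<and> x \<in> U) \<and> \<Inter>\<U> = {x})"

end

theory Submission
  imports Defs
begin

text \<open>
  By Hahn--Banach the dual \<open>E'\<close> separates the points of \<open>E\<close>, so \<open>\<sigma>(E,E')\<close> is \<open>T\<^sub>1\<close>.
  In a regular \<open>T\<^sub>1\<close> space with a \<open>\<sigma>\<close>-locally finite network \<open>\<Union>\<^sub>n \<N>\<^sub>n\<close>, the point \<open>x\<close>
  is the intersection of the open sets obtained by removing from the space the closures of the
  members of \<open>\<N>\<^sub>n\<close> that avoid \<open>x\<close>. Taking \<open>x = 0\<close>, each of these countably many weak
  neighbourhoods contains a basic one determined by finitely many functionals, so a sequence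
  \<open>g\<^sub>n \<in> E'\<close> already separates points. The injection \<open>y \<mapsto> (g\<^sub>n y)\<^sub>n\<close> into \<open>\<real>\<^sup>\<nat>\<close> induces
  the required weaker separable metrizable locally convex topology and gives \<open>|E| \<le> |\<real>\<^sup>\<nat>| = |\<real>|\<close>.
  Finally, on any finite set of points every \<open>f \<in> E'\<close> agrees with a finite combination of the
  \<open>g\<^sub>n\<close>, so the combinations with rational coefficients are weak-star dense in \<open>E'\<close>.
\<close>

section \<open>Hahn--Banach extension\<close>

definition sublinear :: "('a::real_vector \<Rightarrow> real) \<Rightarrow> bool" where
  "sublinear p \<longleftrightarrow> (\<forall>x y. p (x + y) \<le> p x + p y) \<and> (\<forall>c x. 0 \<le> c \<longrightarrow> p (c *\<^sub>R x) = c * p x)"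

lemma sublinear_add: "sublinear p \<Longrightarrow> p (x + y) \<le> p x + p y"
  by (simp add: sublinear_def)

lemma sublinear_scale: "sublinear p \<Longrightarrow> 0 \<le> c \<Longrightarrow> p (c *\<^sub>R x) = c * p x"
  by (simp add: sublinear_def)

lemma sublinear_0: "sublinear p \<Longrightarrow> p 0 = 0"
  using sublinear_scale[of p 0 0] by simp

lemma sublinear_scale_ge:
  assumes p: "sublinear p"
  shows "c * p x \<le> p (c *\<^sub>R x)"
proof (cases "c \<ge> 0")
  case True
  then show ?thesis using sublinear_scale[OF p] by simp
next
  case False
  have "0 \<le> p x + p (- x)"
    using sublinear_add[OF p, of x "- x"] sublinear_0[OF p] by simp
  then have "c * (p x + p (- x)) \<le> 0"
    using False by (simp add: mult_nonpos_nonneg)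
  then have "c * p x \<le> - c * p (- x)"
    by (simp add: algebra_simps)
  moreover have "p (c *\<^sub>R x) = - c * p (- x)"
    using sublinear_scale[OF p, of "- c" "- x"] False by simp
  ultimately show ?thesis by simp
qed

text \<open>Partial linear functionals dominated by \<open>p\<close> are handled through their graphs, so that
  extension is inclusion and Zorn's lemma applies to the subset order.\<close>

definition dominated_linear_graph :: "('a::real_vector \<Rightarrow> real) \<Rightarrow> ('a \<times> real) set \<Rightarrow> bool" where
  "dominated_linear_graph p G \<longleftrightarrow> single_valued G \<and>
     (\<forall>a r b s. (a, r) \<in> G \<longrightarrow> (b, s) \<in> G \<longrightarrow> (a + b, r + s) \<in> G) \<and>
     (\<forall>c a r. (a, r) \<in> G \<longrightarrow> (c *\<^sub>R a, c * r) \<in> G) \<and>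
     (\<forall>a r. (a, r) \<in> G \<longrightarrow> r \<le> p a)"

lemma dominated_linear_graphD:
  assumes "dominated_linear_graph p G"
  shows "(a, r) \<in> G \<Longrightarrow> (a, s) \<in> G \<Longrightarrow> r = s"
    and "(a, r) \<in> G \<Longrightarrow> (b, s) \<in> G \<Longrightarrow> (a + b, r + s) \<in> G"
    and "(a, r) \<in> G \<Longrightarrow> (c *\<^sub>R a, c * r) \<in> G"
    and "(a, r) \<in> G \<Longrightarrow> r \<le> p a"
  using assms unfolding dominated_linear_graph_def single_valued_def by blast+

lemma dominated_linear_graph_zero:
  "dominated_linear_graph p G \<Longrightarrow> G \<noteq> {} \<Longrightarrow> (0, 0) \<in> G"
  using dominated_linear_graphD(3)[of p G _ _ 0] by fastforce

lemma dominated_linear_graph_extension_bounds: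
  assumes p: "sublinear p" and G: "dominated_linear_graph p G" "G \<noteq> {}"
  obtains r where "\<And>a s. (a, s) \<in> G \<Longrightarrow> s - p (a - y) \<le> r"
    and "\<And>b t. (b, t) \<in> G \<Longrightarrow> r \<le> p (b + y) - t"
proof -
  have between: "s - p (a - y) \<le> p (b + y) - t" if "(a, s) \<in> G" "(b, t) \<in> G" for a s b t
  proof -
    have "s + t \<le> p ((a - y) + (b + y))"
      using dominated_linear_graphD(2,4)[OF G(1)] that by simp
    also have "\<dots> \<le> p (a - y) + p (b + y)"
      by (rule sublinear_add[OF p])
    finally show ?thesis by simp
  qed
  define r where "r = Sup {s - p (a - y) | a s. (a, s) \<in> G}"
  note zero = dominated_linear_graph_zero[OF G]
  show thesis
  proof (rule that)
    show "s - p (a - y) \<le> r" if "(a, s) \<in> G" for a s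
      unfolding r_def
      by (rule cSup_upper) (use that between[OF _ zero] in \<open>auto simp: bdd_above_def\<close>)
    show "r \<le> p (b + y) - t" if "(b, t) \<in> G" for b t
      unfolding r_def by (rule cSup_least) (use zero that between in auto)
  qed
qed

lemma dominated_linear_graph_extension_value:
  assumes p: "sublinear p" and G: "dominated_linear_graph p G" "G \<noteq> {}"
  obtains r where "\<And>a s c. (a, s) \<in> G \<Longrightarrow> s + c * r \<le> p (a + c *\<^sub>R y)"
proof -
  obtain r where lower: "\<And>a s. (a, s) \<in> G \<Longrightarrow> s - p (a - y) \<le> r"
    and upper: "\<And>b t. (b, t) \<in> G \<Longrightarrow> r \<le> p (b + y) - t"
    using dominated_linear_graph_extension_bounds[OF p G] by blast
  note scale = dominated_linear_graphD(3)[OF G(1)]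
  \<comment> \<open>for \<open>c \<noteq> 0\<close>, rescale by \<open>\<bar>c\<bar>\<close> and use the bound on the matching side of \<open>r\<close>\<close>
  have rescale: "p (a + c *\<^sub>R y) = d * p (inverse d *\<^sub>R a + (c / d) *\<^sub>R y)" if "d > 0" for a c d
  proof -
    have "a + c *\<^sub>R y = d *\<^sub>R (inverse d *\<^sub>R a + (c / d) *\<^sub>R y)"
      using that by (simp add: scaleR_add_right)
    then show ?thesis
      using sublinear_scale[OF p] that by simp
  qed
  show thesis
  proof (rule that)
    fix a s and c :: real
    assume as: "(a, s) \<in> G"
    consider "c < 0" | "c = 0" | "c > 0" by linarith
    then show "s + c * r \<le> p (a + c *\<^sub>R y)"
    proof cases
      case 1
      then have d: "- c > 0" by simp
      have "inverse (- c) * s - p (inverse (- c) *\<^sub>R a - y) \<le> r"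
        using lower[OF scale[OF as]] .
      then have "s - (- c) * p (inverse (- c) *\<^sub>R a - y) \<le> - c * r"
        using d by (simp add: field_simps)
      moreover have "p (a + c *\<^sub>R y) = - c * p (inverse (- c) *\<^sub>R a - y)"
        using rescale[OF d, of a c] 1 by simp
      ultimately show ?thesis by simp
    next
      case 2
      then show ?thesis using dominated_linear_graphD(4)[OF G(1) as] by simp
    next
      case 3
      have "r \<le> p (inverse c *\<^sub>R a + y) - inverse c * s"
        using upper[OF scale[OF as]] .
      then have "c * r \<le> c * p (inverse c *\<^sub>R a + y) - s"
        using 3 by (simp add: field_simps)
      moreover have "p (a + c *\<^sub>R y) = c * p (inverse c *\<^sub>R a + y)"
        using rescale[OF 3, of a c] 3 by simp
      ultimately show ?thesis by simp
    qed
  qed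
qed

definition graph_extension :: "('a::real_vector \<times> real) set \<Rightarrow> 'a \<Rightarrow> real \<Rightarrow> ('a \<times> real) set" where
  "graph_extension G y r = {(a + c *\<^sub>R y, s + c * r) | a s c. (a, s) \<in> G}"

lemma single_valued_graph_extension:
  assumes G: "dominated_linear_graph p G" and y: "y \<notin> Domain G"
  shows "single_valued (graph_extension G y r)"
proof (rule single_valuedI)
  fix x u v
  assume "(x, u) \<in> graph_extension G y r" "(x, v) \<in> graph_extension G y r"
  then obtain a s c a' s' c' where as: "(a, s) \<in> G" "(a', s') \<in> G"
    and x: "x = a + c *\<^sub>R y" "x = a' + c' *\<^sub>R y" and uv: "u = s + c * r" "v = s' + c' * r"
    unfolding graph_extension_def by blast
  show "u = v"
  proof (cases "c = c'")
    case True
    then show ?thesis using x uv dominated_linear_graphD(1)[OF G, of a s s'] as by simp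
  next
    case False
    \<comment> \<open>otherwise \<open>y\<close> would be a multiple of \<open>a - a'\<close>, which lies in the domain of \<open>G\<close>\<close>
    note add = dominated_linear_graphD(2)[OF G] and scale = dominated_linear_graphD(3)[OF G]
    have "(inverse (c' - c) *\<^sub>R (a + (-1) *\<^sub>R a'), inverse (c' - c) * (s + (-1) * s')) \<in> G"
      using scale[OF add[OF as(1) scale[OF as(2)]]] .
    moreover have "inverse (c' - c) *\<^sub>R (a + (-1) *\<^sub>R a') = y"
    proof -
      have "a + (-1) *\<^sub>R a' = (c' - c) *\<^sub>R y"
        using x by (simp add: algebra_simps)
      then show ?thesis using False by simp
    qed
    ultimately show ?thesis using y by (metis Domain.DomainI)
  qed
qed

lemma dominated_linear_graph_extend:
  assumes p: "sublinear p" and G: "dominated_linear_graph p G" "G \<noteq> {}" and y: "y \<notin> Domain G"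
  obtains G' where "dominated_linear_graph p G'" "G \<subseteq> G'" "y \<in> Domain G'"
proof -
  obtain r where r: "\<And>a s c. (a, s) \<in> G \<Longrightarrow> s + c * r \<le> p (a + c *\<^sub>R y)"
    using dominated_linear_graph_extension_value[OF p G] by blast
  let ?G' = "graph_extension G y r"
  have "(a + b, u + v) \<in> ?G'" if au: "(a, u) \<in> ?G'" and bv: "(b, v) \<in> ?G'" for a b u v
  proof -
    obtain a1 s1 c1 a2 s2 c2 where "(a1, s1) \<in> G" "(a2, s2) \<in> G"
      and "a = a1 + c1 *\<^sub>R y" "u = s1 + c1 * r" "b = a2 + c2 *\<^sub>R y" "v = s2 + c2 * r"
      using au bv unfolding graph_extension_def by blast
    then show ?thesis unfolding graph_extension_def
      by (intro CollectI exI[of _ "a1 + a2"] exI[of _ "s1 + s2"] exI[of _ "c1 + c2"])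
        (simp add: dominated_linear_graphD(2)[OF G(1)] algebra_simps)
  qed
  moreover have "(k *\<^sub>R a, k * u) \<in> ?G'" if au: "(a, u) \<in> ?G'" for k a u
  proof -
    obtain a1 s1 c1 where "(a1, s1) \<in> G" "a = a1 + c1 *\<^sub>R y" "u = s1 + c1 * r"
      using au unfolding graph_extension_def by blast
    then show ?thesis unfolding graph_extension_def
      by (intro CollectI exI[of _ "k *\<^sub>R a1"] exI[of _ "k * s1"] exI[of _ "k * c1"])
        (simp add: dominated_linear_graphD(3)[OF G(1)] algebra_simps)
  qed
  moreover have "u \<le> p a" if "(a, u) \<in> ?G'" for a u
    using that r unfolding graph_extension_def by blast
  ultimately have "dominated_linear_graph p ?G'"
    using single_valued_graph_extension[OF G(1) y] unfolding dominated_linear_graph_def by blast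
  moreover have "G \<subseteq> ?G'"
    unfolding graph_extension_def by force
  moreover have "(y, r) \<in> ?G'"
    unfolding graph_extension_def using dominated_linear_graph_zero[OF G(1,2)] by force
  ultimately show thesis using that by blast
qed

lemma dominated_linear_graph_Union_chain:
  assumes "subset.chain A C" and "\<And>G. G \<in> C \<Longrightarrow> dominated_linear_graph p G"
  shows "dominated_linear_graph p (\<Union>C)"
proof -
  have comparable: "G \<subseteq> H \<or> H \<subseteq> G" if "G \<in> C" "H \<in> C" for G H
    using assms(1) that unfolding subset_chain_def by blast
  have "r = s" if r: "(a, r) \<in> \<Union>C" and s: "(a, s) \<in> \<Union>C" for a r s
  proof -
    obtain G H where "G \<in> C" "H \<in> C" "(a, r) \<in> G" "(a, s) \<in> H"
      using r s by blast
    then show ?thesis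
      using comparable dominated_linear_graphD(1)[OF assms(2)] by blast
  qed
  moreover have "(a + b, r + s) \<in> \<Union>C" if r: "(a, r) \<in> \<Union>C" and s: "(b, s) \<in> \<Union>C" for a r b s
  proof -
    obtain G H where "G \<in> C" "H \<in> C" "(a, r) \<in> G" "(b, s) \<in> H"
      using r s by blast
    then show ?thesis
      using comparable dominated_linear_graphD(2)[OF assms(2)] by blast
  qed
  moreover have "(c *\<^sub>R a, c * r) \<in> \<Union>C" "r \<le> p a" if "(a, r) \<in> \<Union>C" for c a r
    using that dominated_linear_graphD(3,4)[OF assms(2)] by blast+
  ultimately show ?thesis
    unfolding dominated_linear_graph_def single_valued_def by blast
qed

lemma dominated_linear_graph_line:
  assumes p: "sublinear p"
  shows "dominated_linear_graph p (range (\<lambda>c. (c *\<^sub>R x, c * p x)))"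
proof -
  let ?L = "range (\<lambda>c. (c *\<^sub>R x, c * p x))"
  have "single_valued ?L"
  proof (rule single_valuedI, elim rangeE)
    fix a r s c d
    assume "(a, r) = (c *\<^sub>R x, c * p x)" "(a, s) = (d *\<^sub>R x, d * p x)"
    then show "r = s"
      using sublinear_0[OF p] by (cases "x = 0") auto
  qed
  moreover have "(a + b, r + s) \<in> ?L" if "(a, r) \<in> ?L" "(b, s) \<in> ?L" for a r b s
  proof -
    obtain c d where "a = c *\<^sub>R x" "r = c * p x" "b = d *\<^sub>R x" "s = d * p x"
      using \<open>(a, r) \<in> ?L\<close> \<open>(b, s) \<in> ?L\<close> by auto
    then show ?thesis
      by (intro image_eqI[of _ _ "c + d"]) (simp_all add: algebra_simps)
  qed
  moreover have "(k *\<^sub>R a, k * r) \<in> ?L" "r \<le> p a" if "(a, r) \<in> ?L" for k a r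
  proof -
    obtain c where "a = c *\<^sub>R x" "r = c * p x"
      using \<open>(a, r) \<in> ?L\<close> by auto
    then show "(k *\<^sub>R a, k * r) \<in> ?L" "r \<le> p a"
      using sublinear_scale_ge[OF p, of c x] by (auto intro: image_eqI[of _ _ "k * c"])
  qed
  ultimately show ?thesis
    unfolding dominated_linear_graph_def by blast
qed

lemma total_dominated_linear_graph:
  assumes p: "sublinear p"
  obtains M where "dominated_linear_graph p M" "(x, p x) \<in> M" "Domain M = UNIV"
proof -
  define A where "A = {G. dominated_linear_graph p G \<and> (x, p x) \<in> G}"
  have "\<exists>U\<in>A. \<forall>X\<in>C. X \<subseteq> U" if "subset.chain A C" for C
  proof (cases "C = {}")
    case True
    have "range (\<lambda>c. (c *\<^sub>R x, c * p x)) \<in> A"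
      using dominated_linear_graph_line[OF p, of x] rangeI[of "\<lambda>c. (c *\<^sub>R x, c * p x)" 1]
      unfolding A_def by simp
    then show ?thesis using True by blast
  next
    case False
    have "dominated_linear_graph p (\<Union>C)"
      by (rule dominated_linear_graph_Union_chain[OF that]) (use that in \<open>auto simp: A_def subset_chain_def\<close>)
    moreover have "(x, p x) \<in> \<Union>C"
      using that False by (auto simp: A_def subset_chain_def)
    ultimately have "\<Union>C \<in> A"
      unfolding A_def by blast
    then show ?thesis by blast
  qed
  then have "\<exists>M\<in>A. \<forall>X\<in>A. M \<subseteq> X \<longrightarrow> X = M"
    by (rule subset_Zorn)
  then obtain M where M: "M \<in> A" and maximal: "\<And>X. X \<in> A \<Longrightarrow> M \<subseteq> X \<Longrightarrow> X = M"
    by blast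
  have graph: "dominated_linear_graph p M" and base: "(x, p x) \<in> M"
    using M unfolding A_def by auto
  have "y \<in> Domain M" for y
  proof (rule ccontr)
    assume y: "y \<notin> Domain M"
    have "M \<noteq> {}" using base by blast
    then obtain G where "dominated_linear_graph p G" "M \<subseteq> G" "y \<in> Domain G"
      using dominated_linear_graph_extend[OF p graph _ y] by blast
    moreover from this have "G = M"
      using maximal[of G] base unfolding A_def by blast
    ultimately show False
      using y by blast
  qed
  then show thesis
    using that graph base by blast
qed

theorem Hahn_Banach_sublinear:
  assumes p: "sublinear p"
  obtains f where "linear f" "\<And>y. f y \<le> p y" "f x = p x"
proof -
  obtain M where graph: "dominated_linear_graph p M" and base: "(x, p x) \<in> M"
    and total: "Domain M = UNIV"
    using total_dominated_linear_graph[OF p] by blast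
  define f where "f y = (SOME r. (y, r) \<in> M)" for y
  have f_graph: "(y, f y) \<in> M" for y
    unfolding f_def using total by (auto intro: someI)
  have f_eq: "f y = r" if "(y, r) \<in> M" for y r
    using dominated_linear_graphD(1)[OF graph f_graph that] .
  show thesis
  proof
    show "linear f"
    proof (rule linearI)
      show "f (x + y) = f x + f y" for x y
        by (rule f_eq[OF dominated_linear_graphD(2)[OF graph f_graph f_graph]])
      show "f (c *\<^sub>R x) = c *\<^sub>R f x" for c x
        using f_eq[OF dominated_linear_graphD(3)[OF graph f_graph]] by simp
    qed
    show "f y \<le> p y" for y
      using dominated_linear_graphD(4)[OF graph f_graph] .
    show "f x = p x"
      using f_eq[OF base] .
  qed
qed

section \<open>Minkowski functionals and the dual of a locally convex space\<close>

definition minkowski_functional :: "'a::real_vector set \<Rightarrow> 'a \<Rightarrow> real" where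
  "minkowski_functional W y = Inf {t. 0 < t \<and> inverse t *\<^sub>R y \<in> W}"

context
  fixes W :: "'a::real_vector set"
  assumes convex: "convex W" and zero: "0 \<in> W" and absorbing: "\<And>y. \<exists>t>0. t *\<^sub>R y \<in> W"
begin

lemma minkowski_functional_le:
  assumes "0 < t" "inverse t *\<^sub>R y \<in> W"
  shows "minkowski_functional W y \<le> t"
  unfolding minkowski_functional_def
  by (rule cInf_lower) (use assms in \<open>auto simp: bdd_below_def intro: exI[of _ 0]\<close>)

lemma minkowski_functional_greatest:
  assumes "\<And>t. 0 < t \<Longrightarrow> inverse t *\<^sub>R y \<in> W \<Longrightarrow> c \<le> t"
  shows "c \<le> minkowski_functional W y"
proof -
  obtain t where "t > 0" "t *\<^sub>R y \<in> W"
    using absorbing by blast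
  then have "inverse t \<in> {t. 0 < t \<and> inverse t *\<^sub>R y \<in> W}"
    by simp
  then have "{t. 0 < t \<and> inverse t *\<^sub>R y \<in> W} \<noteq> {}"
    by blast
  then show ?thesis
    unfolding minkowski_functional_def by (rule cInf_greatest) (use assms in auto)
qed

lemma minkowski_functional_nonneg: "0 \<le> minkowski_functional W y"
  by (rule minkowski_functional_greatest) simp

lemma inverse_scaleR_mem_mono:
  assumes "0 < t" "inverse t *\<^sub>R y \<in> W" "t \<le> t'"
  shows "inverse t' *\<^sub>R y \<in> W"
proof -
  have "(t / t') *\<^sub>R (inverse t *\<^sub>R y) + (1 - t / t') *\<^sub>R 0 \<in> W"
    using assms by (intro convexD[OF convex _ zero]) auto
  then show ?thesis
    using assms by (simp add: field_simps)
qed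

lemma mem_if_minkowski_functional_less_one:
  assumes "minkowski_functional W y < 1"
  shows "y \<in> W"
proof (rule ccontr)
  assume "y \<notin> W"
  have "1 \<le> t" if "0 < t" "inverse t *\<^sub>R y \<in> W" for t
    using inverse_scaleR_mem_mono[of t y 1] that \<open>y \<notin> W\<close> by (cases "t \<le> 1") auto
  then have "1 \<le> minkowski_functional W y"
    by (rule minkowski_functional_greatest)
  with assms show False by simp
qed

lemma minkowski_functional_add:
  "minkowski_functional W (y + z) \<le> minkowski_functional W y + minkowski_functional W z"
proof -
  have sum_mem: "inverse (s + t) *\<^sub>R (y + z) \<in> W"
    if "0 < s" "inverse s *\<^sub>R y \<in> W" "0 < t" "inverse t *\<^sub>R z \<in> W" for s t
  proof -
    have "(s / (s + t)) *\<^sub>R (inverse s *\<^sub>R y) + (t / (s + t)) *\<^sub>R (inverse t *\<^sub>R z) \<in> W"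
      using that by (intro convexD[OF convex]) (auto simp: add_divide_distrib[symmetric])
    then show ?thesis
      using that by (simp add: scaleR_add_right inverse_eq_divide)
  qed
  have "minkowski_functional W (y + z) - t \<le> minkowski_functional W y"
    if "0 < t" "inverse t *\<^sub>R z \<in> W" for t
    using minkowski_functional_le[OF _ sum_mem] that
    by (intro minkowski_functional_greatest) (simp add: algebra_simps)
  then have "minkowski_functional W (y + z) - minkowski_functional W y \<le> minkowski_functional W z"
    by (intro minkowski_functional_greatest) (simp add: algebra_simps)
  then show ?thesis
    by simp
qed

lemma minkowski_functional_scale:
  assumes "0 \<le> c"
  shows "minkowski_functional W (c *\<^sub>R y) = c * minkowski_functional W y"
proof (cases "c = 0")
  case True
  have "minkowski_functional W 0 \<le> 0"
    by (rule field_le_epsilon) (use minkowski_functional_le zero in simp)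
  then show ?thesis
    using True minkowski_functional_nonneg[of 0] by simp
next
  case False
  with assms have c: "c > 0" by simp
  have "minkowski_functional W (c *\<^sub>R y) / c \<le> t" if "0 < t" "inverse t *\<^sub>R y \<in> W" for t
    using minkowski_functional_le[of "c * t" "c *\<^sub>R y"] that c by (simp add: field_simps)
  then have "minkowski_functional W (c *\<^sub>R y) / c \<le> minkowski_functional W y"
    by (rule minkowski_functional_greatest)
  moreover have "c * minkowski_functional W y \<le> t" if "0 < t" "inverse t *\<^sub>R (c *\<^sub>R y) \<in> W" for t
    using minkowski_functional_le[of "t / c" y] that c by (simp add: field_simps)
  then have "c * minkowski_functional W y \<le> minkowski_functional W (c *\<^sub>R y)"
    by (rule minkowski_functional_greatest)
  ultimately show ?thesis
    using c by (simp add: field_simps)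
qed

lemma sublinear_minkowski_functional: "sublinear (minkowski_functional W)"
  unfolding sublinear_def by (simp add: minkowski_functional_add minkowski_functional_scale)

lemma minkowski_functional_uminus:
  assumes "\<And>z. - z \<in> W \<longleftrightarrow> z \<in> W"
  shows "minkowski_functional W (- y) = minkowski_functional W y"
  unfolding minkowski_functional_def by (simp add: assms)

end

lemma locally_convex_continuous_map_affine:
  assumes lc: "locally_convex_topology T"
  shows "continuous_map T T (\<lambda>z. c *\<^sub>R (z - a))"
proof -
  have top: "topspace T = UNIV"
    and add: "continuous_map (prod_topology T T) T (\<lambda>(x, y). x + y)"
    and scale: "continuous_map (prod_topology euclideanreal T) T (\<lambda>(c, x). c *\<^sub>R x)"
    using lc by (auto simp: locally_convex_topology_def)
  have "continuous_map T (prod_topology T T) (\<lambda>z. (z, - a))"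
    by (intro continuous_map_pairedI) (simp_all add: top)
  from continuous_map_compose[OF this add] have "continuous_map T T (\<lambda>z. z - a)"
    by (simp add: o_def)
  then have "continuous_map T (prod_topology euclideanreal T) (\<lambda>z. (c, z - a))"
    by (intro continuous_map_pairedI) simp_all
  from continuous_map_compose[OF this scale] show ?thesis
    by (simp add: o_def)
qed

lemma locally_convex_openin_affine_vimage:
  assumes "locally_convex_topology T" "openin T W"
  shows "openin T {z. c *\<^sub>R (z - a) \<in> W}"
  using openin_continuous_map_preimage[OF locally_convex_continuous_map_affine assms(2)] assms(1)
  by (simp add: locally_convex_topology_def)

lemma locally_convex_absorbing:
  assumes lc: "locally_convex_topology T" and W: "openin T W" "0 \<in> W"
  shows "\<exists>t>0. t *\<^sub>R y \<in> W"
proof -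
  have "continuous_map euclideanreal (prod_topology euclideanreal T) (\<lambda>c. (c, y))"
    using lc by (intro continuous_map_pairedI) (simp_all add: locally_convex_topology_def)
  moreover have "continuous_map (prod_topology euclideanreal T) T (\<lambda>(c, x). c *\<^sub>R x)"
    using lc by (simp add: locally_convex_topology_def)
  ultimately have "continuous_map euclideanreal T (\<lambda>c. c *\<^sub>R y)"
    using continuous_map_compose by (force simp: o_def)
  from openin_continuous_map_preimage[OF this W(1)] have "open {c. c *\<^sub>R y \<in> W}"
    by simp
  moreover have "0 \<in> {c. c *\<^sub>R y \<in> W}"
    using W(2) by simp
  ultimately obtain e where e: "e > 0" "ball 0 e \<subseteq> {c. c *\<^sub>R y \<in> W}"
    by (meson open_contains_ball_eq)
  then have "e / 2 \<in> {c. c *\<^sub>R y \<in> W}"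
    by (intro subsetD[OF e(2)]) simp
  then show ?thesis
    using e(1) by (intro exI[of _ "e / 2"]) auto
qed

lemma continuous_map_bounded_by_minkowski_functional:
  assumes lc: "locally_convex_topology T" and W: "openin T W" "convex W" "0 \<in> W"
    and f: "linear f" "\<And>y. \<bar>f y\<bar> \<le> minkowski_functional W y"
  shows "continuous_map T euclideanreal f"
proof -
  have top: "topspace T = UNIV"
    using lc by (simp add: locally_convex_topology_def)
  have "openin T (f -` U)" if "open U" for U
  proof (subst openin_subopen, intro ballI)
    fix y0
    assume "y0 \<in> f -` U"
    then obtain e where e: "e > 0" "ball (f y0) e \<subseteq> U"
      using \<open>open U\<close> open_contains_ball by blast
    define N where "N = {z. (2 / e) *\<^sub>R (z - y0) \<in> W}"
    have "f z \<in> U" if "z \<in> N" for z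
    proof -
      have "minkowski_functional W (z - y0) \<le> e / 2"
        using that e(1) locally_convex_absorbing[OF lc W(1,3)]
        by (intro minkowski_functional_le[OF W(2,3)]) (auto simp: N_def)
      then have "\<bar>f z - f y0\<bar> < e"
        using f(2)[of "z - y0"] e(1) by (simp add: linear_diff[OF f(1)])
      then show ?thesis
        using e(2) by (auto simp: dist_real_def abs_minus_commute)
    qed
    moreover have "openin T N" "y0 \<in> N"
      unfolding N_def using locally_convex_openin_affine_vimage[OF lc W(1)] W(3) by auto
    ultimately show "\<exists>N. openin T N \<and> y0 \<in> N \<and> N \<subseteq> f -` U"
      by blast
  qed
  then show ?thesis
    by (simp add: continuous_map_def top vimage_def)
qed

lemma locally_convex_symmetric_convex_nhds:
  assumes lc: "locally_convex_topology T" and U: "openin T U" "0 \<in> U"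
  obtains W where "openin T W" "convex W" "0 \<in> W" "W \<subseteq> U" "\<And>z. - z \<in> W \<longleftrightarrow> z \<in> W"
proof -
  obtain V where V: "openin T V" "convex V" "0 \<in> V" "V \<subseteq> U"
    using lc U unfolding locally_convex_topology_def by meson
  have "openin T (uminus -` V)"
    using locally_convex_openin_affine_vimage[OF lc V(1), of "-1" 0] by (simp add: vimage_def)
  moreover have "convex (uminus -` V)"
    by (rule convex_linear_vimage[OF linear_uminus V(2)])
  ultimately show thesis
    using V by (intro that[of "V \<inter> uminus -` V"]) (auto intro: convex_Int)
qed

lemma dual_space_separates_points:
  assumes lc: "locally_convex_topology T" and "x \<noteq> 0"
  obtains f where "f \<in> dual_space T" "f x \<noteq> 0"
proof -
  obtain U where U: "openin T U" "0 \<in> U" "x \<notin> U"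
    using lc \<open>x \<noteq> 0\<close> unfolding locally_convex_topology_def Hausdorff_space_def
    by (metis UNIV_I disjnt_iff)
  \<comment> \<open>symmetry of \<open>W\<close> makes its gauge dominate \<open>\<bar>f\<bar>\<close>, not just \<open>f\<close>\<close>
  obtain W where W: "openin T W" "convex W" "0 \<in> W" "W \<subseteq> U" "\<And>z. - z \<in> W \<longleftrightarrow> z \<in> W"
    by (rule locally_convex_symmetric_convex_nhds[OF lc U(1,2)]) blast
  have absorbing: "\<And>y. \<exists>t>0. t *\<^sub>R y \<in> W"
    using locally_convex_absorbing[OF lc W(1,3)] .
  define p where "p = minkowski_functional W"
  have "sublinear p"
    unfolding p_def by (rule sublinear_minkowski_functional[OF W(2,3) absorbing])
  then obtain f where f: "linear f" "\<And>y. f y \<le> p y" "f x = p x"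
    using Hahn_Banach_sublinear[of p x] by blast
  have "\<bar>f y\<bar> \<le> p y" for y
  proof -
    have "- f y \<le> p y"
      using f(2)[of "- y"] linear_neg[OF f(1), of y]
        minkowski_functional_uminus[OF W(2,3) absorbing W(5), of y]
      unfolding p_def by simp
    then show ?thesis
      using f(2)[of y] by linarith
  qed
  then have "f \<in> dual_space T"
    using continuous_map_bounded_by_minkowski_functional[OF lc W(1-3) f(1)] f(1)
    unfolding dual_space_def p_def by blast
  moreover have "\<not> p x < 1"
    using mem_if_minkowski_functional_less_one[OF W(2,3) absorbing] W(4) U(3) unfolding p_def by blast
  ultimately show thesis
    using that[of f] f(3) by simp
qed

section \<open>The weak topology and countable pseudocharacter\<close>

lemma openin_finite_box:
  assumes "finite I" "\<And>i. i \<in> I \<Longrightarrow> continuous_map X euclideanreal (h i)"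
  shows "openin X {y \<in> topspace X. \<forall>i\<in>I. \<bar>h i y - c i\<bar> < e}"
proof -
  have "openin X ((\<Inter>i\<in>I. {y \<in> topspace X. h i y \<in> ball (c i) e}) \<inter> topspace X)"
    using assms by (intro openin_INT openin_continuous_map_preimage) auto
  moreover have "(\<Inter>i\<in>I. {y \<in> topspace X. h i y \<in> ball (c i) e}) \<inter> topspace X
      = {y \<in> topspace X. \<forall>i\<in>I. \<bar>h i y - c i\<bar> < e}"
    by (auto simp: dist_real_def abs_minus_commute)
  ultimately show ?thesis by simp
qed

lemma zero_mem_dual_space: "(\<lambda>_. 0) \<in> dual_space T"
  unfolding dual_space_def by (auto intro: linearI)

lemma topspace_weak_topology [simp]: "topspace (weak_topology T) = UNIV"
proof -
  have "UNIV \<in> {f -` U | f U. f \<in> dual_space T \<and> open U}"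
    using zero_mem_dual_space by (intro CollectI exI[of _ "\<lambda>_. 0"] exI[of _ UNIV]) auto
  then show ?thesis
    unfolding weak_topology_def by auto
qed

lemma openin_weak_topology_vimage:
  "f \<in> dual_space T \<Longrightarrow> open U \<Longrightarrow> openin (weak_topology T) (f -` U)"
  unfolding weak_topology_def by (rule topology_generated_by_Basis) blast

lemma continuous_map_weak_topology:
  "f \<in> dual_space T \<Longrightarrow> continuous_map (weak_topology T) euclideanreal f"
  using openin_weak_topology_vimage by (auto simp: continuous_map_def vimage_def)

lemma weak_topology_nhds_box:
  assumes "openin (weak_topology T) U" "x \<in> U"
  obtains F e where "finite F" "F \<subseteq> dual_space T" "e > 0" "{y. \<forall>f\<in>F. \<bar>f y - f x\<bar> < e} \<subseteq> U"
proof -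
  have "generate_topology_on {f -` U | f U. f \<in> dual_space T \<and> open U} U"
    using assms(1) unfolding weak_topology_def openin_topology_generated_by_iff .
  then have "\<exists>F e. finite F \<and> F \<subseteq> dual_space T \<and> e > 0 \<and> {y. \<forall>f\<in>F. \<bar>f y - f x\<bar> < e} \<subseteq> U"
    using assms(2)
  proof (induction arbitrary: x)
    case Empty
    then show ?case by simp
  next
    case (Int U V x)
    then obtain F1 e1 F2 e2 where
      F1: "finite F1" "F1 \<subseteq> dual_space T" "e1 > 0" "{y. \<forall>f\<in>F1. \<bar>f y - f x\<bar> < e1} \<subseteq> U" and
      F2: "finite F2" "F2 \<subseteq> dual_space T" "e2 > 0" "{y. \<forall>f\<in>F2. \<bar>f y - f x\<bar> < e2} \<subseteq> V"
      by (meson IntD1 IntD2)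
    have "{y. \<forall>f\<in>F1 \<union> F2. \<bar>f y - f x\<bar> < min e1 e2} \<subseteq> U \<inter> V"
      using F1(4) F2(4) by auto
    then show ?case
      using F1 F2 by (intro exI[of _ "F1 \<union> F2"] exI[of _ "min e1 e2"]) simp
  next
    case (UN K x)
    then obtain V where "V \<in> K" "x \<in> V"
      by blast
    with UN.IH[OF this] show ?case
      by blast
  next
    case (Basis S x)
    then obtain f V where S: "S = f -` V" "f \<in> dual_space T" "open V"
      by blast
    then obtain e where "e > 0" "ball (f x) e \<subseteq> V"
      using Basis.prems open_contains_ball by blast
    then have "{y. \<forall>g\<in>{f}. \<bar>g y - g x\<bar> < e} \<subseteq> S"
      using S(1) by (force simp: dist_real_def abs_minus_commute)
    then show ?case
      using S(2) \<open>e > 0\<close> by blast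
  qed
  then show thesis
    using that by blast
qed

lemma t1_space_weak_topology:
  assumes lc: "locally_convex_topology T"
  shows "t1_space (weak_topology T)"
  unfolding t1_space_def topspace_weak_topology
proof (intro ballI impI)
  fix x y :: 'a
  assume "x \<noteq> y"
  then obtain f where f: "f \<in> dual_space T" "f (x - y) \<noteq> 0"
    using dual_space_separates_points[OF lc, of "x - y"] by auto
  then have "f x \<noteq> f y"
    by (simp add: dual_space_def linear_diff)
  moreover have "openin (weak_topology T) (f -` (- {f y}))"
    by (rule openin_weak_topology_vimage[OF f(1)]) (simp add: open_Compl)
  ultimately show "\<exists>U. openin (weak_topology T) U \<and> x \<in> U \<and> y \<notin> U"
    by blast
qed

lemma regular_space_network_separates_closure:
  assumes "regular_space X" "network_in X \<N>" "closedin X {x}" "y \<in> topspace X" "y \<noteq> x"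
  obtains S where "S \<in> \<N>" "y \<in> X closure_of S" "x \<notin> X closure_of S"
proof -
  obtain V W where V: "openin X V" "y \<in> V" and W: "openin X W" "x \<in> W" and "disjnt V W"
    using assms(1,3-5) unfolding regular_space_def by (metis Diff_iff empty_iff insert_iff insert_subset)
  then obtain S where S: "S \<in> \<N>" "y \<in> S" "S \<subseteq> V"
    using assms(2) unfolding network_in_def by blast
  have "x \<notin> X closure_of S"
    using W S(3) \<open>disjnt V W\<close> unfolding in_closure_of disjnt_def by blast
  moreover have "y \<in> X closure_of S"
    using closure_of_subset[of S X] S(2,3) openin_subset[OF V(1)] by blast
  ultimately show thesis
    using that S(1) by blast
qed

lemma countable_pseudocharacter_if_sigma_space:
  fixes X :: "'a topology"
  assumes sigma: "sigma_space X" and t1: "t1_space X"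
  shows "countable_pseudocharacter X"
  unfolding countable_pseudocharacter_def
proof
  fix x
  assume x: "x \<in> topspace X"
  obtain \<N> and \<F> :: "nat \<Rightarrow> 'a set set" where reg: "regular_space X" and net: "network_in X \<N>"
    and \<N>: "\<N> = (\<Union>n. \<F> n)" and lf: "\<And>n. locally_finite_in X (\<F> n)"
    using sigma unfolding sigma_space_def sigma_locally_finite_in_def by blast
  define U where "U n = topspace X - \<Union>((\<lambda>S. X closure_of S) ` {S \<in> \<F> n. x \<notin> X closure_of S})" for n
  have U_open: "openin X (U n)" for n
  proof -
    have "locally_finite_in X {S \<in> \<F> n. x \<notin> X closure_of S}"
      using lf by (rule locally_finite_in_subset) blast
    then show ?thesis
      unfolding U_def by (intro openin_diff openin_topspace closedin_Union_locally_finite_closure)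
  qed
  have x_U: "x \<in> U n" for n
    using x unfolding U_def by blast
  have "\<exists>n. y \<notin> U n" if y: "y \<in> topspace X" "y \<noteq> x" for y
  proof -
    obtain S where "S \<in> \<N>" "y \<in> X closure_of S" "x \<notin> X closure_of S"
      using regular_space_network_separates_closure[OF reg net _ y] t1 x
      by (metis t1_space_closedin_singleton)
    then show ?thesis
      using \<N> unfolding U_def by blast
  qed
  then have "\<Inter>(insert (topspace X) (range U)) \<subseteq> {x}"
    by blast
  moreover have "{x} \<subseteq> \<Inter>(insert (topspace X) (range U))"
    using x x_U by blast
  ultimately have "\<Inter>(insert (topspace X) (range U)) = {x}"
    by (rule subset_antisym)
  moreover have "\<forall>V \<in> insert (topspace X) (range U). openin X V \<and> x \<in> V"
    using x U_open x_U by blast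
  ultimately show "\<exists>\<U>. countable \<U> \<and> (\<forall>V\<in>\<U>. openin X V \<and> x \<in> V) \<and> \<Inter>\<U> = {x}"
    by (intro exI[of _ "insert (topspace X) (range U)"]) simp
qed

lemma weak_topology_nhds_zero_contains_kernel:
  assumes "openin (weak_topology T) U" "0 \<in> U"
  shows "\<exists>F. finite F \<and> F \<subseteq> dual_space T \<and> (\<forall>y. (\<forall>f\<in>F. f y = 0) \<longrightarrow> y \<in> U)"
proof -
  obtain F e where F: "finite F" "F \<subseteq> dual_space T" "e > 0" "{y. \<forall>f\<in>F. \<bar>f y - f 0\<bar> < e} \<subseteq> U"
    using assms by (rule weak_topology_nhds_box)
  have "y \<in> U" if y: "\<forall>f\<in>F. f y = 0" for y
  proof -
    have "\<bar>f y - f 0\<bar> < e" if f: "f \<in> F" for f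
    proof -
      have "linear f" "f y = 0"
        using f F(2) y by (auto simp: dual_space_def)
      then show ?thesis
        using F(3) by (simp add: linear_0)
    qed
    then show ?thesis
      using F(4) by blast
  qed
  then show ?thesis
    using F(1,2) by blast
qed

lemma countable_separating_dual_sequence:
  assumes "countable_pseudocharacter (weak_topology T)"
  obtains g :: "nat \<Rightarrow> 'a::real_vector \<Rightarrow> real"
  where "\<And>n. g n \<in> dual_space T" "\<And>y. (\<And>n. g n y = 0) \<Longrightarrow> y = 0"
proof -
  obtain \<U> where \<U>: "countable \<U>" "\<And>U. U \<in> \<U> \<Longrightarrow> openin (weak_topology T) U \<and> 0 \<in> U"
    "\<Inter>\<U> = {0 :: 'a}"
    using assms unfolding countable_pseudocharacter_def by (metis UNIV_I topspace_weak_topology)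
  have "\<forall>U\<in>\<U>. \<exists>F. finite F \<and> F \<subseteq> dual_space T \<and> (\<forall>y. (\<forall>f\<in>F. f y = 0) \<longrightarrow> y \<in> U)"
  proof
    fix U
    assume "U \<in> \<U>"
    with \<U>(2) have "openin (weak_topology T) U" "0 \<in> U"
      by auto
    then show "\<exists>F. finite F \<and> F \<subseteq> dual_space T \<and> (\<forall>y. (\<forall>f\<in>F. f y = 0) \<longrightarrow> y \<in> U)"
      by (rule weak_topology_nhds_zero_contains_kernel)
  qed
  from bchoice[OF this] obtain F where F: "\<forall>U\<in>\<U>. finite (F U) \<and> F U \<subseteq> dual_space T \<and>
      (\<forall>y. (\<forall>f\<in>F U. f y = 0) \<longrightarrow> y \<in> U)"
    by blast
  \<comment> \<open>the zero functional is added only to make the family nonempty\<close>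
  define D where "D = insert (\<lambda>_. 0) (\<Union>U\<in>\<U>. F U)"
  have "D \<subseteq> dual_space T"
    unfolding D_def using F zero_mem_dual_space by blast
  moreover have "y = 0" if y: "\<forall>f\<in>D. f y = 0" for y
  proof -
    have "y \<in> U" if U: "U \<in> \<U>" for U
    proof -
      have "\<forall>f\<in>F U. f y = 0"
        using y U unfolding D_def by blast
      then show ?thesis
        using F U by blast
    qed
    then show ?thesis
      using \<U>(3) by blast
  qed
  moreover have "range (from_nat_into D) = D"
    using \<U>(1) F by (intro range_from_nat_into) (auto simp: D_def intro: countable_finite)
  ultimately show thesis
    by (intro that[of "from_nat_into D"]) (auto, metis rangeE)
qed

section \<open>The topology induced by a sequence of functionals\<close>

lemma second_countable_euclidean:
  "second_countable (euclidean :: 'a::second_countable_topology topology)"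
proof -
  obtain \<B> :: "'a set set" where \<B>: "countable \<B>" "\<And>C. C \<in> \<B> \<Longrightarrow> open C"
    "\<And>S. open S \<Longrightarrow> \<exists>\<U>. \<U> \<subseteq> \<B> \<and> S = \<Union>\<U>"
    using univ_second_countable by blast
  show ?thesis
    unfolding second_countable_def
  proof (intro exI[of _ \<B>] conjI allI impI)
    fix U :: "'a set" and x
    assume "openin euclidean U \<and> x \<in> U"
    then show "\<exists>V\<in>\<B>. x \<in> V \<and> V \<subseteq> U"
      using \<B>(3) by (metis UnionE Union_upper open_openin subset_iff)
  qed (use \<B> in auto)
qed

lemma powertop_real_nhds_box:
  assumes "openin (powertop_real UNIV) V" "w \<in> V"
  obtains I e where "finite I" "e > 0" "\<And>z. (\<forall>i\<in>I. \<bar>z i - w i\<bar> < e) \<Longrightarrow> z \<in> V"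
proof -
  obtain W where W: "finite {i. W i \<noteq> UNIV}" "\<And>i. open (W i)" "w \<in> Pi\<^sub>E UNIV W" "Pi\<^sub>E UNIV W \<subseteq> V"
    using assms unfolding openin_product_topology_alt by auto
  define I where "I = {i. W i \<noteq> UNIV}"
  have "w i \<in> W i" for i
    using W(3) by (simp add: PiE_iff)
  then have "\<forall>i\<in>I. \<exists>e>0. ball (w i) e \<subseteq> W i"
    using W(2) open_contains_ball_eq by blast
  then obtain E where E: "\<And>i. i \<in> I \<Longrightarrow> E i > 0 \<and> ball (w i) (E i) \<subseteq> W i"
    by metis
  define e where "e = Min (insert 1 (E ` I))"
  have I: "finite I"
    using W(1) by (simp add: I_def)
  have e: "e > 0" "\<And>i. i \<in> I \<Longrightarrow> e \<le> E i"
    unfolding e_def using I E by auto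
  have "z \<in> V" if z: "\<forall>i\<in>I. \<bar>z i - w i\<bar> < e" for z
  proof -
    have "z i \<in> W i" for i
    proof (cases "i \<in> I")
      case True
      then have "z i \<in> ball (w i) (E i)"
        using z e(2) by (fastforce simp: dist_real_def abs_minus_commute)
      then show ?thesis
        using E True by blast
    next
      case False
      then show ?thesis by (simp add: I_def)
    qed
    then show ?thesis
      using W(4) by (auto simp: PiE_UNIV_domain)
  qed
  then show thesis
    using that I e(1) by blast
qed

definition sequence_induced_topology :: "(nat \<Rightarrow> 'a \<Rightarrow> real) \<Rightarrow> 'a topology" where
  "sequence_induced_topology g = pullback_topology UNIV (\<lambda>y n. g n y) (powertop_real UNIV)"

context
  fixes g :: "nat \<Rightarrow> 'a::real_vector \<Rightarrow> real"
begin

lemma topspace_sequence_induced_topology [simp]: "topspace (sequence_induced_topology g) = UNIV"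
  by (simp add: sequence_induced_topology_def topspace_pullback_topology)

lemma continuous_map_sequence_induced_topology:
  "continuous_map (sequence_induced_topology g) euclideanreal (g n)"
proof -
  have "continuous_map (sequence_induced_topology g) euclideanreal ((\<lambda>v. v n) \<circ> (\<lambda>y n. g n y))"
    unfolding sequence_induced_topology_def
    by (intro continuous_map_pullback continuous_map_product_projection) simp
  then show ?thesis
    by (simp add: o_def)
qed

lemma continuous_map_into_sequence_induced_topology:
  assumes "\<And>n. continuous_map X euclideanreal (\<lambda>z. g n (h z))"
  shows "continuous_map X (sequence_induced_topology g) h"
  unfolding sequence_induced_topology_def
  by (rule continuous_map_pullback') (use assms in \<open>simp_all add: continuous_map_componentwise_UNIV o_def\<close>)

lemma sequence_induced_topology_nhds_box:
  assumes "openin (sequence_induced_topology g) U" "x \<in> U"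
  obtains I e where "finite I" "e > 0" "{y. \<forall>i\<in>I. \<bar>g i y - g i x\<bar> < e} \<subseteq> U"
proof -
  obtain V where V: "openin (powertop_real UNIV) V" "U = (\<lambda>y n. g n y) -` V"
    using assms(1) unfolding sequence_induced_topology_def openin_pullback_topology by auto
  then obtain I e where I: "finite I" "e > 0" "\<And>z. (\<forall>i\<in>I. \<bar>z i - g i x\<bar> < e) \<Longrightarrow> z \<in> V"
    using powertop_real_nhds_box[OF V(1), of "\<lambda>n. g n x"] assms(2) by blast
  have "{y. \<forall>i\<in>I. \<bar>g i y - g i x\<bar> < e} \<subseteq> U"
    using I(3) V(2) by auto
  then show thesis
    using that I(1,2) by blast
qed

lemma sequence_induced_topology_convex_nhds:
  assumes lin: "\<And>n. linear (g n)" and U: "openin (sequence_induced_topology g) U" "x \<in> U"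
  obtains V where "openin (sequence_induced_topology g) V" "convex V" "x \<in> V" "V \<subseteq> U"
proof -
  obtain I e where I: "finite I" "e > 0" "{y. \<forall>i\<in>I. \<bar>g i y - g i x\<bar> < e} \<subseteq> U"
    using U by (rule sequence_induced_topology_nhds_box)
  define B where "B = {y. \<forall>i\<in>I. \<bar>g i y - g i x\<bar> < e}"
  have "openin (sequence_induced_topology g) B"
    using openin_finite_box[of I "sequence_induced_topology g" g "\<lambda>i. g i x" e] I(1)
      continuous_map_sequence_induced_topology
    by (simp add: B_def)
  moreover have "B = (\<Inter>i\<in>I. g i -` ball (g i x) e)"
    by (auto simp: B_def dist_real_def abs_minus_commute)
  then have "convex B"
    by (simp add: convex_INT convex_linear_vimage lin)
  ultimately show thesis
    using that I unfolding B_def by auto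
qed

context
  assumes inj: "inj (\<lambda>y n. g n y)"
begin

lemma sequence_induced_topology_homeomorphic:
  "sequence_induced_topology g homeomorphic_space
     subtopology (powertop_real UNIV) (range (\<lambda>y n. g n y))"
proof -
  let ?\<phi> = "\<lambda>y n. g n y"
  have "homeomorphic_map (sequence_induced_topology g) (subtopology (powertop_real UNIV) (range ?\<phi>)) ?\<phi>"
  proof (rule bijective_open_imp_homeomorphic_map)
    have "continuous_map (sequence_induced_topology g) (powertop_real UNIV) (id \<circ> ?\<phi>)"
      unfolding sequence_induced_topology_def by (rule continuous_map_pullback) simp
    then show "continuous_map (sequence_induced_topology g) (subtopology (powertop_real UNIV) (range ?\<phi>)) ?\<phi>"
      by (simp add: continuous_map_in_subtopology)
    show "open_map (sequence_induced_topology g) (subtopology (powertop_real UNIV) (range ?\<phi>)) ?\<phi>"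
      unfolding open_map_def sequence_induced_topology_def openin_pullback_topology openin_subtopology
      by auto
  qed (use inj in auto)
  then show ?thesis
    by (rule homeomorphic_map_imp_homeomorphic_space)
qed

lemma metrizable_sequence_induced_topology: "metrizable_space (sequence_induced_topology g)"
  using homeomorphic_metrizable_space[OF sequence_induced_topology_homeomorphic]
    metrizable_space_subtopology[OF metrizable_space_euclidean]
  by (simp add: euclidean_product_topology)

lemma separable_sequence_induced_topology: "separable_space (sequence_induced_topology g)"
  using homeomorphic_separable_space[OF sequence_induced_topology_homeomorphic]
    second_countable_imp_separable_space[OF second_countable_subtopology[OF second_countable_euclidean]]
  by (simp add: euclidean_product_topology)

lemma locally_convex_sequence_induced_topology:
  assumes lin: "\<And>n. linear (g n)"
  shows "locally_convex_topology (sequence_induced_topology g)"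
  unfolding locally_convex_topology_def
proof (intro conjI allI impI)
  let ?\<tau> = "sequence_induced_topology g"
  note g_cont = continuous_map_sequence_induced_topology
  show "continuous_map (prod_topology ?\<tau> ?\<tau>) ?\<tau> (\<lambda>(x, y). x + y)"
  proof (rule continuous_map_into_sequence_induced_topology)
    fix n
    have "continuous_map (prod_topology ?\<tau> ?\<tau>) euclideanreal (\<lambda>z. g n (fst z) + g n (snd z))"
      using continuous_map_compose[OF continuous_map_fst g_cont]
        continuous_map_compose[OF continuous_map_snd g_cont]
      by (intro continuous_map_add) (simp_all add: o_def)
    then show "continuous_map (prod_topology ?\<tau> ?\<tau>) euclideanreal (\<lambda>z. g n (case z of (x, y) \<Rightarrow> x + y))"
      by (simp add: case_prod_beta linear_add[OF lin])
  qed
  show "continuous_map (prod_topology euclideanreal ?\<tau>) ?\<tau> (\<lambda>(c, x). c *\<^sub>R x)"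
  proof (rule continuous_map_into_sequence_induced_topology)
    fix n
    have "continuous_map (prod_topology euclideanreal ?\<tau>) euclideanreal (\<lambda>z. fst z * g n (snd z))"
      using continuous_map_compose[OF continuous_map_snd g_cont]
      by (intro continuous_map_real_mult continuous_map_fst) (simp add: o_def)
    then show "continuous_map (prod_topology euclideanreal ?\<tau>) euclideanreal
        (\<lambda>z. g n (case z of (c, x) \<Rightarrow> c *\<^sub>R x))"
      by (simp add: case_prod_beta linear_scale[OF lin])
  qed
  show "Hausdorff_space ?\<tau>"
    by (rule metrizable_imp_Hausdorff_space[OF metrizable_sequence_induced_topology])
  show "\<exists>V. openin ?\<tau> V \<and> convex V \<and> x \<in> V \<and> V \<subseteq> U" if "openin ?\<tau> U \<and> x \<in> U" for U x
    using that sequence_induced_topology_convex_nhds[OF lin] by metis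
qed (simp)

end

lemma openin_weak_topology_if_sequence_induced:
  assumes "\<And>n. g n \<in> dual_space T" "openin (sequence_induced_topology g) U"
  shows "openin (weak_topology T) U"
proof -
  have "continuous_map (weak_topology T) (sequence_induced_topology g) id"
    by (rule continuous_map_into_sequence_induced_topology)
      (simp add: continuous_map_weak_topology assms(1))
  from openin_continuous_map_preimage[OF this assms(2)] show ?thesis
    by simp
qed

end

lemma inj_if_separating_linear:
  assumes "\<And>n. linear (g n)" and "\<And>y. (\<And>n. g n y = 0) \<Longrightarrow> y = 0"
  shows "inj (\<lambda>y n. g n y)"
proof (rule injI)
  fix x y
  assume "(\<lambda>n. g n x) = (\<lambda>n. g n y)"
  then have "g n (x - y) = 0" for n
    by (metis assms(1) diff_self linear_diff)
  then show "x = y"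
    using assms(2)[of "x - y"] by simp
qed

section \<open>Cardinality\<close>

lemma nat_real_sequences_lepoll_reals: "(UNIV :: (nat \<Rightarrow> real) set) \<lesssim> (UNIV :: real set)"
proof -
  obtain h :: "real \<Rightarrow> nat set" where h: "bij h"
    using eqpoll_sym[OF nat_sets_eqpoll_reals] unfolding eqpoll_def by blast
  \<comment> \<open>code a sequence of reals as a single set of natural numbers via pairing\<close>
  define F where "F u = {prod_encode (n, k) | n k. k \<in> h (u n)}" for u :: "nat \<Rightarrow> real"
  have "inj F"
  proof (rule injI)
    fix u v
    assume "F u = F v"
    have "k \<in> h (u n) \<longleftrightarrow> prod_encode (n, k) \<in> F u" for u n k
      unfolding F_def by auto
    then have "h (u n) = h (v n)" for n
      using \<open>F u = F v\<close> by blast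
    then have "u n = v n" for n
      by (rule injD[OF bij_is_inj[OF h]])
    then show "u = v" ..
  qed
  then have "(UNIV :: (nat \<Rightarrow> real) set) \<lesssim> (UNIV :: nat set set)"
    unfolding lepoll_def by blast
  also have "\<dots> \<lesssim> (UNIV :: real set)"
    by (rule eqpoll_imp_lepoll[OF nat_sets_eqpoll_reals])
  finally show ?thesis .
qed

lemma eqpoll_reals_if_inj_sequences:
  fixes \<phi> :: "'a::real_vector \<Rightarrow> nat \<Rightarrow> real"
  assumes "inj \<phi>" and "(UNIV :: 'a set) \<noteq> {0}"
  shows "(UNIV :: 'a set) \<approx> (UNIV :: real set)"
proof (rule lepoll_antisym)
  have "(UNIV :: 'a set) \<lesssim> (UNIV :: (nat \<Rightarrow> real) set)"
    using assms(1) unfolding lepoll_def by blast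
  then show "(UNIV :: 'a set) \<lesssim> (UNIV :: real set)"
    using nat_real_sequences_lepoll_reals by (rule lepoll_trans)
  obtain v :: 'a where "v \<noteq> 0"
    using assms(2) by blast
  then have "inj (\<lambda>t::real. t *\<^sub>R v)"
    by (auto intro: injI)
  then show "(UNIV :: real set) \<lesssim> (UNIV :: 'a set)"
    unfolding lepoll_def by blast
qed

section \<open>Weak-star separability\<close>

inductive_set functional_span :: "(nat \<Rightarrow> 'a \<Rightarrow> real) \<Rightarrow> ('a \<Rightarrow> real) set" for g where
  zero: "(\<lambda>_. 0) \<in> functional_span g"
| add_multiple: "h \<in> functional_span g \<Longrightarrow> (\<lambda>y. h y + c * g n y) \<in> functional_span g"

lemma functional_span_generator: "g n \<in> functional_span g"
  using functional_span.add_multiple[OF functional_span.zero, of 1 g n] by simp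

lemma functional_span_add_scaled:
  assumes "h \<in> functional_span g" "h' \<in> functional_span g"
  shows "(\<lambda>y. h y + k * h' y) \<in> functional_span g"
  using assms(2)
proof induction
  case zero
  then show ?case using assms(1) by simp
next
  case (add_multiple h' c n)
  then show ?case
    using functional_span.add_multiple[OF add_multiple.IH, of "k * c" n]
    by (simp add: algebra_simps)
qed

lemma linear_functional_span:
  assumes "\<And>n. linear (g n)" "h \<in> functional_span g"
  shows "linear h"
  using assms(2)
proof induction
  case zero
  show ?case by (rule linearI) simp_all
next
  case (add_multiple h c n)
  then show ?case
    using assms(1)[of n]
    by (intro linearI) (simp_all add: linear_add linear_scale algebra_simps)
qed

lemma functional_span_subset_dual_space:
  assumes "\<And>n. g n \<in> dual_space T"
  shows "functional_span g \<subseteq> dual_space T"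
proof
  fix h
  assume h: "h \<in> functional_span g"
  have "linear h"
    by (rule linear_functional_span[OF _ h]) (use assms in \<open>simp add: dual_space_def\<close>)
  moreover have "continuous_map T euclideanreal h"
    using h
  proof induction
    case (add_multiple h c n)
    then show ?case
      using assms[of n] by (intro continuous_map_add continuous_map_real_mult_left) (auto simp: dual_space_def)
  qed simp
  ultimately show "h \<in> dual_space T"
    by (simp add: dual_space_def)
qed

context
  fixes g :: "nat \<Rightarrow> 'a::real_vector \<Rightarrow> real"
  assumes linear: "\<And>n. linear (g n)" and separating: "\<And>y. (\<And>n. g n y = 0) \<Longrightarrow> y = 0"
begin

lemma mem_span_if_functional_span_annihilates:
  assumes "finite X" "\<And>h. h \<in> functional_span g \<Longrightarrow> (\<forall>x\<in>X. h x = 0) \<Longrightarrow> h a = 0"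
  shows "a \<in> span X"
  using assms
proof (induction X arbitrary: a rule: finite_induct)
  case empty
  then have "a = 0"
    using separating functional_span_generator by blast
  then show ?case by simp
next
  case (insert b X)
  show ?case
  proof (cases "\<exists>h\<in>functional_span g. (\<forall>x\<in>X. h x = 0) \<and> h b \<noteq> 0")
    case False
    then have "a \<in> span X"
      using insert.prems by (intro insert.IH) (metis insert_iff)
    then show ?thesis
      using span_mono[of X "insert b X"] by blast
  next
    case True
    then obtain hb where hb: "hb \<in> functional_span g" "\<forall>x\<in>X. hb x = 0" "hb b \<noteq> 0"
      by blast
    \<comment> \<open>subtracting a multiple of \<open>b\<close> reduces to the smaller set \<open>X\<close>\<close>
    have "a - (hb a / hb b) *\<^sub>R b \<in> span X"
    proof (rule insert.IH)
      fix h
      assume h: "h \<in> functional_span g" "\<forall>x\<in>X. h x = 0"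
      have "(\<lambda>y. h y + (- (h b / hb b)) * hb y) \<in> functional_span g"
        using h(1) hb(1) by (rule functional_span_add_scaled)
      moreover have "\<forall>x\<in>insert b X. h x + (- (h b / hb b)) * hb x = 0"
        using h(2) hb(2,3) by simp
      ultimately have "h a = (h b / hb b) * hb a"
        using insert.prems by fastforce
      then show "h (a - (hb a / hb b) *\<^sub>R b) = 0"
        using linear_functional_span[OF linear h(1)] by (simp add: linear_diff linear_scale)
    qed
    then show ?thesis
      using span_breakdown_eq by blast
  qed
qed

lemma functional_span_interpolates:
  assumes "finite X" "linear f"
  shows "\<exists>h\<in>functional_span g. \<forall>x\<in>X. h x = f x"
  using assms(1)
proof (induction X rule: finite_induct)
  case empty
  then show ?case using functional_span.zero by blast
next
  case (insert a X)
  then obtain h0 where h0: "h0 \<in> functional_span g" "\<forall>x\<in>X. h0 x = f x"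
    by blast
  have lin: "linear (\<lambda>y. f y - h0 y)"
    using assms(2) linear_functional_span[OF linear h0(1)] by (rule linear_compose_sub)
  show ?case
  proof (cases "a \<in> span X")
    case True
    have "f a - h0 a = 0"
      using linear_eq_0_on_span[OF lin, of X a] True h0(2) by simp
    then show ?thesis
      using h0 by auto
  next
    case False
    then obtain h where h: "h \<in> functional_span g" "\<forall>x\<in>X. h x = 0" "h a \<noteq> 0"
      using mem_span_if_functional_span_annihilates[OF insert.hyps(1)] by blast
    define h1 where "h1 y = h0 y + ((f a - h0 a) / h a) * h y" for y
    have "h1 \<in> functional_span g"
      unfolding h1_def using h0(1) h(1) by (rule functional_span_add_scaled)
    moreover have "\<forall>x\<in>insert a X. h1 x = f x"
      unfolding h1_def using h0(2) h(2,3) by simp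
    ultimately show ?thesis
      by blast
  qed
qed

end

definition rational_functional_span :: "(nat \<Rightarrow> 'a \<Rightarrow> real) \<Rightarrow> ('a \<Rightarrow> real) set" where
  "rational_functional_span g = (\<lambda>qs y. \<Sum>(q, n)\<leftarrow>qs. of_rat q * g n y) ` UNIV"

lemma countable_rational_functional_span: "countable (rational_functional_span g)"
  unfolding rational_functional_span_def by simp

lemma rational_functional_span_subset: "rational_functional_span g \<subseteq> functional_span g"
proof -
  have "(\<lambda>y. \<Sum>(q, n)\<leftarrow>qs. of_rat q * g n y) \<in> functional_span g" for qs
  proof (induction qs)
    case Nil
    then show ?case using functional_span.zero by simp
  next
    case (Cons qn qs)
    then show ?case
      using functional_span.add_multiple[OF Cons.IH, of "of_rat (fst qn)" "snd qn"]
      by (simp add: case_prod_beta add.commute)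
  qed
  then show ?thesis
    unfolding rational_functional_span_def by blast
qed

lemma rational_functional_span_subset_dual_space:
  assumes "\<And>n. g n \<in> dual_space T"
  shows "rational_functional_span g \<subseteq> dual_space T"
  using rational_functional_span_subset functional_span_subset_dual_space[of g T, OF assms] by blast

lemma rational_functional_span_approx:
  assumes "h \<in> functional_span g" "finite X" "e > 0"
  shows "\<exists>q\<in>rational_functional_span g. \<forall>x\<in>X. \<bar>q x - h x\<bar> < e"
  using assms(1,3)
proof (induction arbitrary: e)
  case zero
  have "(\<lambda>_. 0) \<in> rational_functional_span g"
    unfolding rational_functional_span_def by (rule image_eqI[of _ _ "[]"]) simp_all
  then show ?case
    using zero by (intro bexI[of _ "\<lambda>_. 0"]) auto
next
  case (add_multiple h c n)
  obtain qs where qs: "\<forall>x\<in>X. \<bar>(\<Sum>(q, n)\<leftarrow>qs. of_rat q * g n x) - h x\<bar> < e / 2"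
    using add_multiple.IH[of "e / 2"] add_multiple.prems unfolding rational_functional_span_def by auto
  define B where "B = 1 + (\<Sum>x\<in>X. \<bar>g n x\<bar>)"
  have B: "B > 0"
    unfolding B_def by (simp add: add_pos_nonneg sum_nonneg)
  have g_le_B: "\<bar>g n x\<bar> \<le> B" if "x \<in> X" for x
    unfolding B_def using member_le_sum[of x X "\<lambda>x. \<bar>g n x\<bar>"] that assms(2) by simp
  obtain r where "c - e / (2 * B) < of_rat r" "of_rat r < c"
    using of_rat_dense[of "c - e / (2 * B)" c] add_multiple.prems B by auto
  then have r: "\<bar>of_rat r - c\<bar> < e / (2 * B)"
    by simp
  define q where "q y = (\<Sum>(q, n)\<leftarrow>(r, n) # qs. of_rat q * g n y)" for y
  have "q \<in> rational_functional_span g"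
    unfolding rational_functional_span_def q_def by (rule image_eqI[OF refl UNIV_I])
  moreover have "\<bar>q x - (h x + c * g n x)\<bar> < e" if "x \<in> X" for x
  proof -
    have "q x - (h x + c * g n x)
        = ((\<Sum>(q, n)\<leftarrow>qs. of_rat q * g n x) - h x) + (of_rat r - c) * g n x"
      unfolding q_def by (simp add: algebra_simps)
    then have "\<bar>q x - (h x + c * g n x)\<bar>
        \<le> \<bar>(\<Sum>(q, n)\<leftarrow>qs. of_rat q * g n x) - h x\<bar> + \<bar>of_rat r - c\<bar> * \<bar>g n x\<bar>"
      by (metis abs_mult abs_triangle_ineq)
    also have "\<dots> < e / 2 + e / (2 * B) * B"
      using qs that g_le_B r by (intro add_less_le_mono mult_mono) auto
    also have "\<dots> = e"
      using B(1) by simp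
    finally show ?thesis .
  qed
  ultimately show ?case
    by blast
qed

lemma weak_star_closure_rational_functional_span:
  fixes g :: "nat \<Rightarrow> 'a::real_vector \<Rightarrow> real"
  assumes dual: "\<And>n. g n \<in> dual_space T" and separating: "\<And>y. (\<And>n. g n y = 0) \<Longrightarrow> y = 0"
    and f: "f \<in> dual_space T"
  shows "f \<in> weak_star_topology T closure_of rational_functional_span g"
  unfolding in_closure_of
proof (intro conjI allI impI)
  show "f \<in> topspace (weak_star_topology T)"
    using f by (simp add: weak_star_topology_def)
  fix W
  assume "f \<in> W \<and> openin (weak_star_topology T) W"
  then obtain V where V: "openin (powertop_real UNIV) V" "W = V \<inter> dual_space T" "f \<in> V"
    unfolding weak_star_topology_def openin_subtopology by blast
  obtain X e where X: "finite X" "e > 0" "\<And>z. (\<forall>x\<in>X. \<bar>z x - f x\<bar> < e) \<Longrightarrow> z \<in> V"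
    using V(1,3) by (rule powertop_real_nhds_box) blast
  have linear: "linear (g n)" for n
    using dual by (simp add: dual_space_def)
  obtain h where h: "h \<in> functional_span g" "\<forall>x\<in>X. h x = f x"
    using functional_span_interpolates[of g X f, OF linear separating X(1)] f
    by (auto simp: dual_space_def)
  obtain q where "q \<in> rational_functional_span g" "\<forall>x\<in>X. \<bar>q x - h x\<bar> < e"
    using rational_functional_span_approx[OF h(1) X(1,2)] by blast
  then show "\<exists>q. q \<in> rational_functional_span g \<and> q \<in> W"
    using X(3) h(2) V(2) rational_functional_span_subset_dual_space[of g T, OF dual] by auto
qed

theorem separable_weak_star_topology:
  fixes g :: "nat \<Rightarrow> 'a::real_vector \<Rightarrow> real"
  assumes dual: "\<And>n. g n \<in> dual_space T" and separating: "\<And>y. (\<And>n. g n y = 0) \<Longrightarrow> y = 0"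
  shows "separable_space (weak_star_topology T)"
proof -
  have "rational_functional_span g \<subseteq> dual_space T"
    by (rule rational_functional_span_subset_dual_space[OF dual])
  moreover have "weak_star_topology T closure_of rational_functional_span g = dual_space T"
    using weak_star_closure_rational_functional_span[of g T, OF dual separating]
      closure_of_subset_topspace[of "weak_star_topology T"]
    by (auto simp: weak_star_topology_def)
  ultimately show ?thesis
    unfolding separable_space_def using countable_rational_functional_span
    by (auto simp: weak_star_topology_def)
qed

theorem proposition3p4:
  fixes T :: "('a::real_vector) topology"
  assumes "locally_convex_topology T"
    and "(UNIV :: 'a set) \<noteq> {0}"
    and "sigma_space (weak_topology T)"
  shows "(\<exists>\<tau>. locally_convex_topology \<tau> \<and> metrizable_space \<tau> \<and> separable_space \<tau> \<and>
            (\<forall>U. openin \<tau> U \<longrightarrow> openin (weak_topology T) U))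
       \<and> countable_pseudocharacter (weak_topology T)
       \<and> (UNIV :: 'a set) \<approx> (UNIV :: real set)
       \<and> separable_space (weak_star_topology T)"
proof -
  have pseudocharacter: "countable_pseudocharacter (weak_topology T)"
    using assms(3) t1_space_weak_topology[OF assms(1)] by (rule countable_pseudocharacter_if_sigma_space)
  then obtain g :: "nat \<Rightarrow> 'a \<Rightarrow> real"
    where dual: "\<And>n. g n \<in> dual_space T" and separating: "\<And>y. (\<And>n. g n y = 0) \<Longrightarrow> y = 0"
    by (rule countable_separating_dual_sequence) blast
  have linear: "linear (g n)" for n
    using dual by (simp add: dual_space_def)
  have inj: "inj (\<lambda>y n. g n y)"
    using inj_if_separating_linear[of g, OF linear separating] .
  let ?\<tau> = "sequence_induced_topology g"
  have "locally_convex_topology ?\<tau> \<and> metrizable_space ?\<tau> \<and> separable_space ?\<tau> \<and>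
      (\<forall>U. openin ?\<tau> U \<longrightarrow> openin (weak_topology T) U)"
    using locally_convex_sequence_induced_topology[of g, OF inj linear]
      metrizable_sequence_induced_topology[OF inj] separable_sequence_induced_topology[OF inj]
      openin_weak_topology_if_sequence_induced[of g T, OF dual]
    by blast
  then show ?thesis
    using pseudocharacter eqpoll_reals_if_inj_sequences[OF inj assms(2)]
      separable_weak_star_topology[of g T, OF dual separating]
    by blast
qed

end
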